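(* The map $\eta:\mathbf{T}_b\to\mathbf{F}$ is a bijection, and for all $t_1,t_2\in\mathbf{T}_b$: $t_1\leq t_2$ in the Tamari order if and only if $\eta(t_1)\leq\eta(t_2)$ in $\mathbf{F}$. In other words, $\eta$ is a poset isomorphism.
   Context: $\mathbf{T}_b$ is the set of planar binary trees, defined recursively: the single leaf $|$ is a planar binary tree, and if $t_1,t_2$ are planar binary trees then so is $t_1\vee t_2$ (grafting $t_1,t_2$ as left and right subtrees on a new root). The Tamari order $\leq$ on $\mathbf{T}_b$ is the reflexive-transitive closure of the relation $t\to t'$, where $t'$ is obtained from $t$ by replacing one subtree of the form $(a\vee b)\vee c$ by $a\vee(b\vee c)$. Planar rooted trees have their children linearly ordered left to right; $\mathbf{F}$ is the set of planar forests (finite, possibly empty, sequences $t_1\cdots t_n$ of planar rooted trees; $1$ = empty forest; product = concatenation). $B^+(F)$ is the tree obtained by grafting the trees of $F$ (in order) on a new common root. $\eta$ is defined recursively by $\eta(|)=1$, $\eta(t_1\vee t_2)=B^+(\eta(t_1))\,\eta(t_2)$. Order on $\mathbf{F}$: on vertices, $s\geq_{high}s'$ iff $s'=s$ or $s'$ is an ancestor of $s$; for $\geq_{high}$-incomparable $s,s'$, $s\geq_{left}s'$ iff $s\in t_i,s'\in t_j$ with $i<j$, or both lie in $t_i$ and $s\geq_{left}s'$ in the forest obtained from $t_i$ by deleting its root (recursively). An admissible transformation of a forest: choose a vertex $s$ which is the leftmost child of its parent $u$; if $u$ is not a root, with parent $r$, move the subtree rooted at $s$ to become a child of $r$ immediately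 to the left of $u$; if $u$ is a root, move the subtree rooted at $s$ to become a new tree immediately to the left of the tree of $u$; everything else unchanged. $F\leq G$ iff $G$ is obtained from $F$ by a finite (possibly empty) sequence of admissible transformations. *)

theory Defs
  imports Main
begin

text \<open>Planar binary trees: Leaf is the single leaf, Join t1 t2 is t1 \<or> t2.\<close>
datatype btree = Leaf | Join btree btree

inductive tam_step :: "btree \<Rightarrow> btree \<Rightarrow> bool" where
  rot: "tam_step (Join (Join a b) c) (Join a (Join b c))"
| left: "tam_step t t' \<Longrightarrow> tam_step (Join t u) (Join t' u)"
| right: "tam_step u u' \<Longrightarrow> tam_step (Join t u) (Join t u')"

definition tamari_le :: "btree \<Rightarrow> btree \<Rightarrow> bool" where
  "tamari_le = tam_step\<^sup>*\<^sup>*"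

datatype ptree = Node "ptree list"

type_synonym forest = "ptree list"

definition Bplus :: "forest \<Rightarrow> ptree" where
  "Bplus F = Node F"

fun eta :: "btree \<Rightarrow> forest" where
  "eta Leaf = []"
| "eta (Join t1 t2) = Bplus (eta t1) # eta t2"

text \<open>Root case: s is the leftmost child of a root u,
  and s's subtree becomes a new tree just left of u's tree. Non-root case:
  the same operation applied to the children list of the parent r of u
  (at any depth).\<close>
inductive adm_step :: "forest \<Rightarrow> forest \<Rightarrow> bool" where
  root: "adm_step (F1 @ [Node (s # cs)] @ F2) (F1 @ [s, Node cs] @ F2)"
| inner: "adm_step F G \<Longrightarrow> adm_step (F1 @ [Node F] @ F2) (F1 @ [Node G] @ F2)"

definition forest_le :: "forest \<Rightarrow> forest \<Rightarrow> bool" where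
  "forest_le = adm_step\<^sup>*\<^sup>*"

end

theory Submission
  imports Defs
begin

text \<open>Reading a forest T_1 ... T_n with T_1 = B+(F) as the binary tree eta^-1(F) \<or> eta^-1(T_2 ... T_n)
  inverts eta. Under this dictionary the rotation (a \<or> b) \<or> c \<rightarrow> a \<or> (b \<or> c) is exactly the
  admissible transformation detaching the leftmost child of a root, and performing a step inside
  a left (right) subtree is performing it inside the first tree's children (the remaining trees).
  So eta matches the two covering relations, hence their reflexive-transitive closures.\<close>

fun btree_of_forest :: "forest \<Rightarrow> btree" where
  "btree_of_forest [] = Leaf"
| "btree_of_forest (Node F # G) = Join (btree_of_forest F) (btree_of_forest G)"

lemma btree_of_forest_eta [simp]: "btree_of_forest (eta t) = t"
  by (induction t) (auto simp: Bplus_def)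

lemma eta_btree_of_forest [simp]: "eta (btree_of_forest F) = F"
  by (induction F rule: btree_of_forest.induct) (auto simp: Bplus_def)

lemma bij_eta: "bij eta"
  by (rule o_bij[of btree_of_forest]) auto

lemma rtranclp_bij_iff:
  assumes "bij f" and step_iff: "\<And>x y. R (f x) (f y) \<longleftrightarrow> S x y"
  shows "R\<^sup>*\<^sup>* (f x) (f y) \<longleftrightarrow> S\<^sup>*\<^sup>* x y"
proof
  have "S\<^sup>*\<^sup>* (inv f a) (inv f b)" if "R\<^sup>*\<^sup>* a b" for a b
    using that
  proof (induction rule: rtranclp_induct)
    case (step b c)
    then have "S (inv f b) (inv f c)"
      using step_iff[of "inv f b" "inv f c"] \<open>bij f\<close> by (simp add: bij_is_surj surj_f_inv_f)
    with step.IH show ?case by simp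
  qed simp
  then show "R\<^sup>*\<^sup>* (f x) (f y) \<Longrightarrow> S\<^sup>*\<^sup>* x y"
    using \<open>bij f\<close> by (metis bij_is_inj inv_f_f)
next
  show "S\<^sup>*\<^sup>* x y \<Longrightarrow> R\<^sup>*\<^sup>* (f x) (f y)"
    by (induction rule: rtranclp_induct) (auto simp: step_iff intro: rtranclp.rtrancl_into_rtrancl)
qed

lemma adm_step_Cons: "adm_step F G \<Longrightarrow> adm_step (T # F) (T # G)"
proof (induction rule: adm_step.induct)
  case (root F1 s cs F2)
  show ?case using adm_step.root[of "T # F1" s cs F2] by simp
next
  case (inner F G F1 F2)
  then show ?case using adm_step.inner[of F G "T # F1" F2] by simp
qed

lemma tam_step_imp_adm_step: "tam_step t t' \<Longrightarrow> adm_step (eta t) (eta t')"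
proof (induction rule: tam_step.induct)
  case (rot a b c)
  show ?case using adm_step.root[of "[]" "Node (eta a)" "eta b" "eta c"]
    by (simp add: Bplus_def)
next
  case (left t t' u)
  then show ?case using adm_step.inner[of "eta t" "eta t'" "[]" "eta u"]
    by (simp add: Bplus_def)
next
  case (right u u' t)
  then show ?case by (simp add: adm_step_Cons)
qed

lemma tam_step_btree_of_forest_append:
  "tam_step (btree_of_forest F) (btree_of_forest G) \<Longrightarrow>
    tam_step (btree_of_forest (H @ F)) (btree_of_forest (H @ G))"
proof (induction H)
  case (Cons T H)
  then show ?case by (cases T) (auto intro: tam_step.right)
qed simp

lemma adm_step_imp_tam_step: "adm_step F G \<Longrightarrow> tam_step (btree_of_forest F) (btree_of_forest G)"
proof (induction rule: adm_step.induct)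
  case (root F1 s cs F2)
  obtain S where "s = Node S" by (cases s)
  then show ?case
    using tam_step_btree_of_forest_append[of "Node (s # cs) # F2" "s # Node cs # F2" F1]
    by (simp add: tam_step.rot)
next
  case (inner F G F1 F2)
  then show ?case
    using tam_step_btree_of_forest_append[of "Node F # F2" "Node G # F2" F1]
    by (simp add: tam_step.left)
qed

lemma adm_step_eta_iff: "adm_step (eta t) (eta t') \<longleftrightarrow> tam_step t t'"
  using adm_step_imp_tam_step[of "eta t" "eta t'"] tam_step_imp_adm_step by auto

theorem theorem31:
  shows "bij eta \<and> (\<forall>t1 t2. tamari_le t1 t2 \<longleftrightarrow> forest_le (eta t1) (eta t2))"
  using bij_eta rtranclp_bij_iff[where R = adm_step and S = tam_step, OF bij_eta adm_step_eta_iff]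
  by (simp add: tamari_le_def forest_le_def)

end
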